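(* Let $n\ge5$, $\Delta\subset B_n$ a proper ideal, and $1<k\le\lfloor\frac{n-1}2\rfloor$. Then $\mathrm{Bier}(B_n,\Delta)$ is a $k$-nearly neighborly $(n-2)$-sphere with $2n$ vertices if and only if (i) for all $A\subseteq[1,n]$, $A\in\Delta\iff[1,n]\setminus A\notin\Delta$, and (ii) every $B\subseteq[1,n]$ with $|B|\le k$ lies in $\Delta$ (and hence no $C\subseteq[1,n]$ with $|C|\ge n-k$ lies in $\Delta$).
   Context: $B_n$ is the Boolean lattice of subsets of $[1,n]$. A proper ideal $\Delta\subset B_n$ is a nonempty family of subsets of $[1,n]$ closed under taking subsets with $[1,n]\notin\Delta$. The Bier sphere $\mathrm{Bier}(B_n,\Delta)$ is the simplicial complex whose faces are the pairs $(B,C)$ with $B\subsetneq C\subseteq[1,n]$, $B\in\Delta$, $C\notin\Delta$, with $(B',C')$ a face of $(B,C)$ iff $B'\subseteq B$ and $C\subseteq C'$ (concretely the vertex set $B\sqcup\{\bar d: d\notin C\}$ on $[1,n]\sqcup\{\bar1,\dots,\bar n\}$); it is a simplicial $(n-2)$-sphere. A simplicial complex $\Gamma$ with vertex set $V$ is centrally symmetric if there is a fixed-point-free involution $\alpha$ of $V$ with $\alpha(F)$ a face for every face $F$ and $\{v,\alpha(v)\}$ not a face for all $v$. A centrally symmetric $\Gamma$ is $k$-nearly neighborly if every antipode-free vertex set (containing no pair $\{v,\alpha(v)\}$) of size at most $k$ is a face; for $k\ge2$ the involution is determined as the unique one with $\{v,\alpha(v)\}\notin\Gamma$. *)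

theory Defs
  imports Main
begin

definition proper_ideal :: "nat \<Rightarrow> nat set set \<Rightarrow> bool" where
  "proper_ideal n \<Delta> \<longleftrightarrow>
     \<Delta> \<subseteq> Pow {1..n} \<and> \<Delta> \<noteq> {} \<and>
     (\<forall>A \<in> \<Delta>. \<forall>B. B \<subseteq> A \<longrightarrow> B \<in> \<Delta>) \<and>
     {1..n} \<notin> \<Delta>"

text \<open>Vertices: Inl d stands for d, Inr d stands for bar d, for d in {1..n}.
  The face (B,C) is the vertex set B \<union> {bar d. d \<notin> C}.\<close>
definition bier :: "nat \<Rightarrow> nat set set \<Rightarrow> (nat + nat) set set" where
  "bier n \<Delta> = {Inl ` B \<union> Inr ` ({1..n} - C) | B C.
      B \<subset> C \<and> C \<subseteq> {1..n} \<and> B \<in> \<Delta> \<and> C \<notin> \<Delta>}"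

definition vertices :: "'v set set \<Rightarrow> 'v set" where
  "vertices K = {v. {v} \<in> K}"

definition centrally_symmetric_by :: "'v set set \<Rightarrow> ('v \<Rightarrow> 'v) \<Rightarrow> bool" where
  "centrally_symmetric_by K \<alpha> \<longleftrightarrow>
     (\<forall>v \<in> vertices K. \<alpha> v \<in> vertices K \<and> \<alpha> (\<alpha> v) = v \<and> \<alpha> v \<noteq> v) \<and>
     (\<forall>F \<in> K. \<alpha> ` F \<in> K) \<and>
     (\<forall>v \<in> vertices K. {v, \<alpha> v} \<notin> K)"

definition nearly_neighborly :: "nat \<Rightarrow> 'v set set \<Rightarrow> bool" where
  "nearly_neighborly k K \<longleftrightarrow>
     (\<exists>\<alpha>. centrally_symmetric_by K \<alpha> \<and>
        (\<forall>S. S \<subseteq> vertices K \<and> (\<forall>v \<in> S. \<alpha> v \<notin> S) \<and> card S \<le> k \<longrightarrow> S \<in> K))"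

end

theory Submission
  imports Defs
begin

text \<open>A face of the Bier sphere is a pair of disjoint sets \<open>B, D \<subseteq> [1,n]\<close> of unbarred and barred
vertices with \<open>B \<in> \<Delta>\<close> and \<open>[1,n] - D \<notin> \<Delta>\<close>, so exchanging \<open>d\<close> and \<open>bar d\<close> maps faces to faces
exactly when \<open>\<Delta>\<close> is Alexander self-dual. Since \<open>{d, bar d}\<close> is never a face, once all \<open>2n\<close> vertices
are present and \<open>k \<ge> 2\<close>, the involution of a \<open>k\<close>-nearly neighborly structure must be this exchange.
Hence \<open>\<Delta>\<close> is self-dual, and every \<open>B\<close> with \<open>|B| \<le> k\<close>, being antipode-free, is a face, i.e.
\<open>B \<in> \<Delta>\<close>. Conversely, an antipode-free set of at most \<open>k\<close> vertices splits into \<open>B\<close> and \<open>D\<close> of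
size at most \<open>k\<close>, both in \<open>\<Delta>\<close>, and self-duality turns \<open>D \<in> \<Delta>\<close> into \<open>[1,n] - D \<notin> \<Delta>\<close>.\<close>

definition swap_sum :: "'a + 'a \<Rightarrow> 'a + 'a" where
  "swap_sum = case_sum Inr Inl"

lemma swap_sum_simps [simp]:
  "swap_sum (Inl x) = Inr x" "swap_sum (Inr x) = Inl x"
  by (simp_all add: swap_sum_def)

lemma swap_sum_swap_sum [simp]: "swap_sum (swap_sum v) = v"
  by (cases v) simp_all

lemma vimage_Inl_image_swap_sum [simp]: "Inl -` (swap_sum ` S) = Inr -` S"
  by (force simp: swap_sum_def split: sum.splits)

lemma vimage_Inr_image_swap_sum [simp]: "Inr -` (swap_sum ` S) = Inl -` S"
  by (force simp: swap_sum_def split: sum.splits)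

lemma vimage_Inl_Plus [simp]: "Inl -` (A <+> B) = A"
  by (auto simp: Plus_def)

lemma vimage_Inr_Plus [simp]: "Inr -` (A <+> B) = B"
  by (auto simp: Plus_def)

lemma vimage_Inl_Inr_image [simp]:
  "Inl -` Inl ` A = A" "Inr -` Inl ` A = {}" "Inl -` Inr ` A = {}" "Inr -` Inr ` A = A"
  by auto

lemma Plus_vimage_Inl_vimage_Inr: "Inl -` S <+> Inr -` S = S"
proof (rule set_eqI)
  show "x \<in> Inl -` S <+> Inr -` S \<longleftrightarrow> x \<in> S" for x
    by (cases x) auto
qed

lemma mem_bier_iff:
  "S \<in> bier n \<Delta> \<longleftrightarrow>
     Inl -` S \<subseteq> {1..n} \<and> Inr -` S \<subseteq> {1..n} \<and> Inl -` S \<inter> Inr -` S = {} \<and>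
     Inl -` S \<in> \<Delta> \<and> {1..n} - Inr -` S \<notin> \<Delta>" (is "_ \<longleftrightarrow> ?R")
proof
  assume "S \<in> bier n \<Delta>"
  then obtain B C where "S = B <+> ({1..n} - C)" "B \<subset> C" "C \<subseteq> {1..n}" "B \<in> \<Delta>" "C \<notin> \<Delta>"
    by (auto simp: bier_def Plus_def)
  moreover have "{1..n} - ({1..n} - C) = C" using \<open>C \<subseteq> {1..n}\<close> by blast
  ultimately show ?R
    by auto
next
  assume S: ?R
  define C where "C = {1..n} - Inr -` S"
  have "{1..n} - C = Inr -` S" using S unfolding C_def by blast
  then have "S = Inl ` (Inl -` S) \<union> Inr ` ({1..n} - C)"
    using Plus_vimage_Inl_vimage_Inr[of S] by (simp add: Plus_def)
  moreover have "C \<subseteq> {1..n}" "C \<notin> \<Delta>"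
    using S unfolding C_def by auto
  moreover have "Inl -` S \<subset> C"
  proof
    show "Inl -` S \<subseteq> C" using S unfolding C_def by blast
    show "Inl -` S \<noteq> C" using S \<open>C \<notin> \<Delta>\<close> by metis
  qed
  moreover have "Inl -` S \<in> \<Delta>" using S by blast
  ultimately show "S \<in> bier n \<Delta>"
    unfolding bier_def by blast
qed

lemma bier_subset_Pow: "bier n \<Delta> \<subseteq> Pow ({1..n} <+> {1..n})"
proof
  fix S assume "S \<in> bier n \<Delta>"
  then have "Inl -` S <+> Inr -` S \<subseteq> {1..n} <+> {1..n}"
    by (auto simp: mem_bier_iff Plus_def)
  then show "S \<in> Pow ({1..n} <+> {1..n})"
    by (simp add: Plus_vimage_Inl_vimage_Inr)
qed

lemma vertices_bier_subset: "vertices (bier n \<Delta>) \<subseteq> {1..n} <+> {1..n}"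
  using bier_subset_Pow unfolding vertices_def by blast

lemma card_vertices_bier_eq_iff:
  "card (vertices (bier n \<Delta>)) = 2 * n \<longleftrightarrow> vertices (bier n \<Delta>) = {1..n} <+> {1..n}"
proof -
  have "card ({1..n} <+> {1..n}) = 2 * n" by (simp add: card_Plus)
  then show ?thesis
    using card_subset_eq[OF _ vertices_bier_subset] by (metis finite_Plus finite_atLeastAtMost)
qed

lemma insert_Inl_Inr_notin_bier: "{Inl d, Inr d} \<notin> bier n \<Delta>"
proof -
  have "{Inl d, Inr d} = {d} <+> {d}" by (auto simp: Plus_def)
  then show ?thesis by (simp add: mem_bier_iff)
qed

lemma empty_mem_if_proper_ideal: "proper_ideal n \<Delta> \<Longrightarrow> {} \<in> \<Delta>"
  unfolding proper_ideal_def by blast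

lemma Inl_image_mem_bier_iff:
  assumes "proper_ideal n \<Delta>"
  shows "Inl ` A \<in> bier n \<Delta> \<longleftrightarrow> A \<in> \<Delta>"
  using assms by (auto simp: mem_bier_iff proper_ideal_def)

lemma Inr_image_mem_bier_iff:
  assumes "proper_ideal n \<Delta>"
  shows "Inr ` A \<in> bier n \<Delta> \<longleftrightarrow> A \<subseteq> {1..n} \<and> {1..n} - A \<notin> \<Delta>"
  using empty_mem_if_proper_ideal[OF assms] by (auto simp: mem_bier_iff)

lemma Inl_mem_vertices_bier_iff:
  "proper_ideal n \<Delta> \<Longrightarrow> Inl d \<in> vertices (bier n \<Delta>) \<longleftrightarrow> {d} \<in> \<Delta>"
  using Inl_image_mem_bier_iff[of n \<Delta> "{d}"] by (simp add: vertices_def)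

lemma Inr_mem_vertices_bier_iff:
  "proper_ideal n \<Delta> \<Longrightarrow> Inr d \<in> vertices (bier n \<Delta>) \<longleftrightarrow> d \<in> {1..n} \<and> {1..n} - {d} \<notin> \<Delta>"
  using Inr_image_mem_bier_iff[of n \<Delta> "{d}"] by (simp add: vertices_def)

lemma vertices_bier_eq_iff:
  assumes "proper_ideal n \<Delta>"
  shows "vertices (bier n \<Delta>) = {1..n} <+> {1..n} \<longleftrightarrow>
    (\<forall>d \<in> {1..n}. {d} \<in> \<Delta> \<and> {1..n} - {d} \<notin> \<Delta>)"
proof -
  have "vertices (bier n \<Delta>) = {1..n} <+> {1..n} \<longleftrightarrow> {1..n} <+> {1..n} \<subseteq> vertices (bier n \<Delta>)"
    using vertices_bier_subset by blast
  also have "\<dots> \<longleftrightarrow> (\<forall>d \<in> {1..n}. {d} \<in> \<Delta> \<and> {1..n} - {d} \<notin> \<Delta>)"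
    using Inl_mem_vertices_bier_iff[OF assms] Inr_mem_vertices_bier_iff[OF assms]
    by (auto simp: Plus_def)
  finally show ?thesis .
qed

definition alexander_self_dual :: "nat \<Rightarrow> nat set set \<Rightarrow> bool" where
  "alexander_self_dual n \<Delta> \<longleftrightarrow> (\<forall>A. A \<subseteq> {1..n} \<longrightarrow> (A \<in> \<Delta> \<longleftrightarrow> {1..n} - A \<notin> \<Delta>))"

lemma swap_sum_image_mem_bier_iff:
  assumes "alexander_self_dual n \<Delta>"
  shows "swap_sum ` F \<in> bier n \<Delta> \<longleftrightarrow> F \<in> bier n \<Delta>"
proof -
  have dual: "A \<in> \<Delta> \<longleftrightarrow> {1..n} - A \<notin> \<Delta>" if "A \<subseteq> {1..n}" for A
    using assms that unfolding alexander_self_dual_def by blast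
  let ?L = "Inl -` F" and ?R = "Inr -` F"
  have "swap_sum ` F \<in> bier n \<Delta> \<longleftrightarrow>
      ?R \<subseteq> {1..n} \<and> ?L \<subseteq> {1..n} \<and> ?R \<inter> ?L = {} \<and> ?R \<in> \<Delta> \<and> {1..n} - ?L \<notin> \<Delta>"
    by (simp add: mem_bier_iff)
  also have "\<dots> \<longleftrightarrow>
      ?L \<subseteq> {1..n} \<and> ?R \<subseteq> {1..n} \<and> ?L \<inter> ?R = {} \<and> ?L \<in> \<Delta> \<and> {1..n} - ?R \<notin> \<Delta>"
    using dual[of ?L] dual[of ?R] by (auto simp: Int_commute)
  also have "\<dots> \<longleftrightarrow> F \<in> bier n \<Delta>"
    by (simp add: mem_bier_iff)
  finally show ?thesis .
qed

lemma alexander_self_dual_if_swap_sum_closed: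
  assumes "proper_ideal n \<Delta>" and "\<forall>F \<in> bier n \<Delta>. swap_sum ` F \<in> bier n \<Delta>"
  shows "alexander_self_dual n \<Delta>"
  unfolding alexander_self_dual_def
proof (intro allI impI)
  fix A assume A: "A \<subseteq> {1..n}"
  have "swap_sum ` Inl ` A = Inr ` A" "swap_sum ` Inr ` A = Inl ` A"
    by (simp_all add: image_image)
  then have "Inl ` A \<in> bier n \<Delta> \<longleftrightarrow> Inr ` A \<in> bier n \<Delta>"
    using assms(2) by metis
  then show "A \<in> \<Delta> \<longleftrightarrow> {1..n} - A \<notin> \<Delta>"
    using A Inl_image_mem_bier_iff[OF assms(1)] Inr_image_mem_bier_iff[OF assms(1)] by blast
qed

lemma centrally_symmetric_by_swap_sum_bier:
  assumes "alexander_self_dual n \<Delta>"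
  shows "centrally_symmetric_by (bier n \<Delta>) swap_sum"
proof -
  have faces: "swap_sum ` F \<in> bier n \<Delta>" if "F \<in> bier n \<Delta>" for F
    using that swap_sum_image_mem_bier_iff[OF assms] by blast
  have "swap_sum v \<in> vertices (bier n \<Delta>)" if "v \<in> vertices (bier n \<Delta>)" for v
    using faces[of "{v}"] that by (simp add: vertices_def)
  moreover have "swap_sum v \<noteq> v" for v :: "nat + nat"
    by (cases v) simp_all
  moreover have "{v, swap_sum v} \<notin> bier n \<Delta>" for v
    using insert_Inl_Inr_notin_bier by (cases v) (simp_all add: insert_commute)
  ultimately show ?thesis
    using faces unfolding centrally_symmetric_by_def by simp
qed

definition nearly_neighborly_by :: "nat \<Rightarrow> 'v set set \<Rightarrow> ('v \<Rightarrow> 'v) \<Rightarrow> bool" where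
  "nearly_neighborly_by k K \<alpha> \<longleftrightarrow> centrally_symmetric_by K \<alpha> \<and>
     (\<forall>S. S \<subseteq> vertices K \<and> (\<forall>v \<in> S. \<alpha> v \<notin> S) \<and> card S \<le> k \<longrightarrow> S \<in> K)"

lemma nearly_neighborly_iff_nearly_neighborly_by:
  "nearly_neighborly k K \<longleftrightarrow> (\<exists>\<alpha>. nearly_neighborly_by k K \<alpha>)"
  by (simp add: nearly_neighborly_def nearly_neighborly_by_def)

lemma nearly_neighborly_by_antipode_eq:
  assumes "nearly_neighborly_by k K \<alpha>" and "2 \<le> k"
    and "u \<in> vertices K" and "v \<in> vertices K" and "{u, v} \<notin> K"
  shows "\<alpha> u = v"
proof (rule ccontr)
  assume "\<alpha> u \<noteq> v"
  have invol: "\<alpha> (\<alpha> w) = w" "\<alpha> w \<noteq> w" if "w \<in> vertices K" for w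
    using assms(1) that unfolding nearly_neighborly_by_def centrally_symmetric_by_def by blast+
  have "\<alpha> v \<noteq> u"
    using \<open>\<alpha> u \<noteq> v\<close> invol(1)[OF assms(4)] by metis
  moreover have "card {u, v} \<le> k"
    using assms(2) by (simp add: card_insert_if)
  ultimately have "{u, v} \<in> K"
    using assms(1,3,4) \<open>\<alpha> u \<noteq> v\<close> invol(2)[OF assms(3)] invol(2)[OF assms(4)]
    unfolding nearly_neighborly_by_def by auto
  with assms(5) show False by contradiction
qed

lemma bier_antipode_eq_swap_sum:
  assumes "nearly_neighborly_by k (bier n \<Delta>) \<alpha>" and "2 \<le> k"
    and "vertices (bier n \<Delta>) = {1..n} <+> {1..n}" and "v \<in> {1..n} <+> {1..n}"
  shows "\<alpha> v = swap_sum v"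
proof -
  obtain d where d: "d \<in> {1..n}" and v: "v = Inl d \<or> v = Inr d"
    using assms(4) by (auto simp: Plus_def)
  have vertices: "Inl d \<in> vertices (bier n \<Delta>)" "Inr d \<in> vertices (bier n \<Delta>)"
    using d unfolding assms(3) by blast+
  have "\<alpha> (Inl d) = Inr d"
    using nearly_neighborly_by_antipode_eq[OF assms(1,2) vertices insert_Inl_Inr_notin_bier] .
  moreover have "\<alpha> (Inr d) = Inl d"
    using nearly_neighborly_by_antipode_eq[OF assms(1,2) vertices(2,1)] insert_Inl_Inr_notin_bier
    by (metis insert_commute)
  ultimately show ?thesis
    using v by auto
qed

lemma alexander_self_dual_if_nearly_neighborly_bier:
  assumes "proper_ideal n \<Delta>" and "nearly_neighborly_by k (bier n \<Delta>) \<alpha>" and "2 \<le> k"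
    and "vertices (bier n \<Delta>) = {1..n} <+> {1..n}"
  shows "alexander_self_dual n \<Delta>"
proof (rule alexander_self_dual_if_swap_sum_closed[OF assms(1)], intro ballI)
  fix F assume F: "F \<in> bier n \<Delta>"
  then have "F \<subseteq> {1..n} <+> {1..n}"
    using bier_subset_Pow by blast
  then have "\<alpha> ` F = swap_sum ` F"
    using bier_antipode_eq_swap_sum[OF assms(2-4)] by (intro image_cong) auto
  moreover have "\<alpha> ` F \<in> bier n \<Delta>"
    using assms(2) F unfolding nearly_neighborly_by_def centrally_symmetric_by_def by blast
  ultimately show "swap_sum ` F \<in> bier n \<Delta>" by simp
qed

lemma card_le_mem_if_nearly_neighborly_bier:
  assumes "proper_ideal n \<Delta>" and "nearly_neighborly_by k (bier n \<Delta>) \<alpha>" and "2 \<le> k"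
    and "vertices (bier n \<Delta>) = {1..n} <+> {1..n}"
    and "B \<subseteq> {1..n}" and "card B \<le> k"
  shows "B \<in> \<Delta>"
proof -
  have "Inl ` B \<subseteq> vertices (bier n \<Delta>)"
    using assms(4,5) by (auto simp: Plus_def)
  moreover have "\<alpha> v \<notin> Inl ` B" if "v \<in> Inl ` B" for v
    using that assms(5) bier_antipode_eq_swap_sum[OF assms(2-4)] by (auto simp: Plus_def)
  moreover have "card (Inl ` B) \<le> k"
    using assms(6) by (simp add: card_image)
  ultimately have "Inl ` B \<in> bier n \<Delta>"
    using assms(2) unfolding nearly_neighborly_by_def by blast
  then show ?thesis
    using Inl_image_mem_bier_iff[OF assms(1)] by blast
qed

lemma nearly_neighborly_by_swap_sum_bier:
  assumes "alexander_self_dual n \<Delta>" and "\<forall>B. B \<subseteq> {1..n} \<and> card B \<le> k \<longrightarrow> B \<in> \<Delta>"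
  shows "nearly_neighborly_by k (bier n \<Delta>) swap_sum"
  unfolding nearly_neighborly_by_def
proof (intro conjI allI impI)
  show "centrally_symmetric_by (bier n \<Delta>) swap_sum"
    using assms(1) by (rule centrally_symmetric_by_swap_sum_bier)
  fix S assume S: "S \<subseteq> vertices (bier n \<Delta>) \<and> (\<forall>v \<in> S. swap_sum v \<notin> S) \<and> card S \<le> k"
  let ?L = "Inl -` S" and ?R = "Inr -` S"
  have L: "?L \<subseteq> {1..n}" and R: "?R \<subseteq> {1..n}"
    using S vertices_bier_subset by (auto simp: Plus_def)
  moreover have "?L \<inter> ?R = {}"
    using S by fastforce
  moreover have "card ?L + card ?R \<le> k"
    using S card_Plus[of ?L ?R] finite_subset[OF L] finite_subset[OF R]
    by (simp add: Plus_vimage_Inl_vimage_Inr)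
  then have "?L \<in> \<Delta>" and "?R \<in> \<Delta>"
    using assms(2) L R by simp_all
  moreover have "{1..n} - ?R \<notin> \<Delta>"
    using assms(1) \<open>?R \<in> \<Delta>\<close> R unfolding alexander_self_dual_def by blast
  ultimately show "S \<in> bier n \<Delta>"
    by (simp add: mem_bier_iff)
qed

theorem proposition16:
  fixes n k :: nat and \<Delta> :: "nat set set"
  assumes "n \<ge> 5" and "proper_ideal n \<Delta>" and "1 < k" and "k \<le> (n - 1) div 2"
  shows "(nearly_neighborly k (bier n \<Delta>) \<and> card (vertices (bier n \<Delta>)) = 2 * n) \<longleftrightarrow>
         ((\<forall>A. A \<subseteq> {1..n} \<longrightarrow> (A \<in> \<Delta> \<longleftrightarrow> {1..n} - A \<notin> \<Delta>)) \<and>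
          (\<forall>B. B \<subseteq> {1..n} \<and> card B \<le> k \<longrightarrow> B \<in> \<Delta>))"
  unfolding card_vertices_bier_eq_iff alexander_self_dual_def[symmetric]
proof (intro iffI conjI)
  assume lhs: "nearly_neighborly k (bier n \<Delta>) \<and> vertices (bier n \<Delta>) = {1..n} <+> {1..n}"
  then obtain \<alpha> where \<alpha>: "nearly_neighborly_by k (bier n \<Delta>) \<alpha>"
    by (auto simp: nearly_neighborly_iff_nearly_neighborly_by)
  have "2 \<le> k" using \<open>1 < k\<close> by simp
  show "alexander_self_dual n \<Delta>"
    using alexander_self_dual_if_nearly_neighborly_bier[OF assms(2) \<alpha> \<open>2 \<le> k\<close>] lhs by blast
  show "\<forall>B. B \<subseteq> {1..n} \<and> card B \<le> k \<longrightarrow> B \<in> \<Delta>"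
    using card_le_mem_if_nearly_neighborly_bier[OF assms(2) \<alpha> \<open>2 \<le> k\<close>] lhs by blast
next
  assume rhs: "alexander_self_dual n \<Delta> \<and> (\<forall>B. B \<subseteq> {1..n} \<and> card B \<le> k \<longrightarrow> B \<in> \<Delta>)"
  then show "nearly_neighborly k (bier n \<Delta>)"
    using nearly_neighborly_by_swap_sum_bier
    unfolding nearly_neighborly_iff_nearly_neighborly_by by blast
  have "{d} \<in> \<Delta>" if "d \<in> {1..n}" for d
    using rhs that \<open>1 < k\<close> by simp
  moreover have "{1..n} - {d} \<notin> \<Delta>" if "{d} \<in> \<Delta>" "d \<in> {1..n}" for d
    using rhs that unfolding alexander_self_dual_def by blast
  ultimately show "vertices (bier n \<Delta>) = {1..n} <+> {1..n}"
    using vertices_bier_eq_iff[OF assms(2)] by blast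
qed

end
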